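(* Let $\sigma_N$ be a preference profile of $n$ metrics over $m$ alternatives, let $\epsilon\ge0$, and let $K\subseteq N$ be a nonempty subset satisfying $\epsilon$-positional proportionality. Then for every score vector $s$ and every alternative $a\in A$, $$\left|f_s(a,\sigma_N)-f_s(a,\sigma_K)\right|\le\epsilon.$$
   Context: Let $N=[n]$ be a set of metrics and $A=[m]$ a set of alternatives. Each metric $i\in N$ has a ranking $\sigma_i$ of $A$; $\sigma_i(a)$ is the position of $a$ (1 is best). For $K\subseteq N$ write $\sigma_K=\{\sigma_i:i\in K\}$. For $K\subseteq N$, $r\in[m]$, $a\in A$, let $C(K,r,a)=|\{i\in K:\sigma_i(a)\le r\}|$. A nonempty $K\subseteq N$ satisfies $\epsilon$-positional proportionality if for all $a\in A$ and $r\in[m]$, $\left|\frac{C(N,r,a)}{|N|}-\frac{C(K,r,a)}{|K|}\right|\le\epsilon$. A scoring rule is given by a score vector $s\in\mathbb{R}^m$ with $s_1\ge s_2\ge\dots\ge s_m$, normalized so that $s_1=1$ and $s_m=0$. For a nonempty $K\subseteq N$, the average score of $a$ is $f_s(a,\sigma_K)=\frac{1}{|K|}\sum_{i\in K}s_{\sigma_i(a)}$. *)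

theory Defs
  imports "HOL-Analysis.Analysis"
begin

text \<open>Metrics are N = {0..<n}, alternatives A = {0..<m}. A profile assigns to each
metric i a ranking sigma i, a bijection from A onto positions {1..m} (1 is best).\<close>

definition is_ranking :: "nat \<Rightarrow> (nat \<Rightarrow> nat) \<Rightarrow> bool" where
  "is_ranking m r \<longleftrightarrow> bij_betw r {0..<m} {1..m}"

definition is_profile :: "nat \<Rightarrow> nat \<Rightarrow> (nat \<Rightarrow> nat \<Rightarrow> nat) \<Rightarrow> bool" where
  "is_profile n m \<sigma> \<longleftrightarrow> (\<forall>i\<in>{0..<n}. is_ranking m (\<sigma> i))"

definition cnt :: "(nat \<Rightarrow> nat \<Rightarrow> nat) \<Rightarrow> nat set \<Rightarrow> nat \<Rightarrow> nat \<Rightarrow> nat" where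
  "cnt \<sigma> K r a = card {i\<in>K. \<sigma> i a \<le> r}"

definition pos_prop :: "nat \<Rightarrow> nat \<Rightarrow> (nat \<Rightarrow> nat \<Rightarrow> nat) \<Rightarrow> real \<Rightarrow> nat set \<Rightarrow> bool" where
  "pos_prop n m \<sigma> \<epsilon> K \<longleftrightarrow> K \<noteq> {} \<and> K \<subseteq> {0..<n} \<and>
     (\<forall>a\<in>{0..<m}. \<forall>r\<in>{1..m}.
        \<bar>real (cnt \<sigma> {0..<n} r a) / real n - real (cnt \<sigma> K r a) / real (card K)\<bar> \<le> \<epsilon>)"

definition score_vector :: "nat \<Rightarrow> (nat \<Rightarrow> real) \<Rightarrow> bool" where
  "score_vector m s \<longleftrightarrow> (\<forall>j\<in>{1..m}. \<forall>k\<in>{1..m}. j \<le> k \<longrightarrow> s k \<le> s j) \<and> s 1 = 1 \<and> s m = 0"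

definition avg_score :: "(nat \<Rightarrow> real) \<Rightarrow> (nat \<Rightarrow> nat \<Rightarrow> nat) \<Rightarrow> nat set \<Rightarrow> nat \<Rightarrow> real" where
  "avg_score s \<sigma> K a = (\<Sum>i\<in>K. s (\<sigma> i a)) / real (card K)"

end

theory Submission
  imports Defs
begin

text \<open>Abel summation: since \<open>s m = 0\<close>, every score \<open>s p\<close> is the sum of the gaps
  \<open>s r - s (r+1)\<close> over \<open>p \<le> r < m\<close>. Hence the average score of \<open>a\<close> over \<open>K\<close> is
  \<open>\<Sum>r. (s r - s (r+1)) C(K,r,a)/|K|\<close>, a combination of the proportions \<open>C(K,r,a)/|K|\<close>
  with nonnegative weights (monotonicity of \<open>s\<close>) summing to \<open>s 1 - s m = 1\<close>.
  So the two averages differ by at most the largest difference of proportions, i.e. by \<open>\<epsilon>\<close>.\<close>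

lemma sum_gaps_atLeastLessThan:
  fixes f :: "nat \<Rightarrow> 'a::ab_group_add"
  assumes "l \<le> p"
  shows "(\<Sum>r\<in>{l..<p}. f r - f (Suc r)) = f l - f p"
proof -
  have "(\<Sum>r\<in>{l..<p}. f r - f (Suc r)) = - (\<Sum>r\<in>{l..<p}. f (Suc r) - f r)"
    by (simp add: sum_negf[symmetric])
  also have "\<dots> = f l - f p"
    using assms by (simp add: sum_Suc_diff')
  finally show ?thesis .
qed

lemma eq_sum_gaps_above:
  fixes f :: "nat \<Rightarrow> real"
  assumes "p \<in> {1..m}"
  shows "f p = f m + (\<Sum>r\<in>{1..<m}. (f r - f (Suc r)) * of_bool (p \<le> r))"
proof -
  have "(\<Sum>r\<in>{1..<m}. (f r - f (Suc r)) * of_bool (p \<le> r)) = (\<Sum>r\<in>{p..<m}. f r - f (Suc r))"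
    using assms by (intro sum.mono_neutral_cong_right) auto
  also have "\<dots> = f p - f m"
    using assms by (simp add: sum_gaps_atLeastLessThan)
  finally show ?thesis by simp
qed

lemma avg_score_eq_weighted_cnt:
  assumes "finite K" and "\<forall>i\<in>K. \<sigma> i a \<in> {1..m}" and "s m = 0"
  shows "avg_score s \<sigma> K a
           = (\<Sum>r\<in>{1..<m}. (s r - s (Suc r)) * (real (cnt \<sigma> K r a) / real (card K)))"
proof -
  have "(\<Sum>i\<in>K. s (\<sigma> i a))
          = (\<Sum>i\<in>K. \<Sum>r\<in>{1..<m}. (s r - s (Suc r)) * of_bool (\<sigma> i a \<le> r))"
  proof (rule sum.cong[OF refl])
    fix i
    assume "i \<in> K"
    then show "s (\<sigma> i a) = (\<Sum>r\<in>{1..<m}. (s r - s (Suc r)) * of_bool (\<sigma> i a \<le> r))"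
      using assms(2,3) eq_sum_gaps_above[of "\<sigma> i a" m s] by simp
  qed
  also have "\<dots> = (\<Sum>r\<in>{1..<m}. (s r - s (Suc r)) * (\<Sum>i\<in>K. of_bool (\<sigma> i a \<le> r)))"
    by (subst sum.swap) (simp add: sum_distrib_left)
  also have "\<dots> = (\<Sum>r\<in>{1..<m}. (s r - s (Suc r)) * real (cnt \<sigma> K r a))"
    using assms(1) by (simp add: cnt_def Int_def)
  finally show ?thesis
    by (simp add: avg_score_def sum_divide_distrib)
qed

lemma abs_weighted_sum_diff_le:
  fixes w x y :: "'i \<Rightarrow> real"
  assumes "\<And>r. r \<in> R \<Longrightarrow> 0 \<le> w r" and "\<And>r. r \<in> R \<Longrightarrow> \<bar>x r - y r\<bar> \<le> \<epsilon>"
  shows "\<bar>(\<Sum>r\<in>R. w r * x r) - (\<Sum>r\<in>R. w r * y r)\<bar> \<le> (\<Sum>r\<in>R. w r) * \<epsilon>"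
proof -
  have "\<bar>(\<Sum>r\<in>R. w r * x r) - (\<Sum>r\<in>R. w r * y r)\<bar> = \<bar>\<Sum>r\<in>R. w r * (x r - y r)\<bar>"
    by (simp add: sum_subtractf right_diff_distrib)
  also have "\<dots> \<le> (\<Sum>r\<in>R. \<bar>w r * (x r - y r)\<bar>)"
    by (rule sum_abs)
  also have "\<dots> \<le> (\<Sum>r\<in>R. w r * \<epsilon>)"
    using assms by (intro sum_mono) (simp add: abs_mult mult_left_mono)
  finally show ?thesis
    by (simp add: sum_distrib_right)
qed

lemma is_profile_position:
  assumes "is_profile n m \<sigma>" and "i < n" and "a < m"
  shows "\<sigma> i a \<in> {1..m}"
proof -
  have "bij_betw (\<sigma> i) {0..<m} {1..m}"
    using assms(1,2) unfolding is_profile_def is_ranking_def by simp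
  from bij_betwE[OF this] show ?thesis
    using assms(3) by simp
qed

theorem theorem5:
  fixes n m :: nat and \<sigma> :: "nat \<Rightarrow> nat \<Rightarrow> nat" and \<epsilon> :: real and K :: "nat set"
    and s :: "nat \<Rightarrow> real" and a :: nat
  assumes "n \<ge> 1"
    and "is_profile n m \<sigma>"
    and "\<epsilon> \<ge> 0"
    and "pos_prop n m \<sigma> \<epsilon> K"
    and "score_vector m s"
    and "a \<in> {0..<m}"
  shows "\<bar>avg_score s \<sigma> {0..<n} a - avg_score s \<sigma> K a\<bar> \<le> \<epsilon>"
proof -
  have K: "K \<subseteq> {0..<n}" and proportional: "\<And>r. r \<in> {1..m} \<Longrightarrow>
      \<bar>real (cnt \<sigma> {0..<n} r a) / real n - real (cnt \<sigma> K r a) / real (card K)\<bar> \<le> \<epsilon>"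
    using assms(4,6) unfolding pos_prop_def by auto
  have s_antimono: "\<And>j k. j \<in> {1..m} \<Longrightarrow> k \<in> {1..m} \<Longrightarrow> j \<le> k \<Longrightarrow> s k \<le> s j"
    and "s 1 = 1" and "s m = 0"
    using assms(5) unfolding score_vector_def by auto
  have position: "\<forall>i\<in>{0..<n}. \<sigma> i a \<in> {1..m}"
    using is_profile_position[OF assms(2)] assms(6) by simp
  have avg_N: "avg_score s \<sigma> {0..<n} a
          = (\<Sum>r\<in>{1..<m}. (s r - s (Suc r)) * (real (cnt \<sigma> {0..<n} r a) / real n))"
    using avg_score_eq_weighted_cnt[of "{0..<n}" \<sigma> a m s] position \<open>s m = 0\<close> by simp
  have avg_K: "avg_score s \<sigma> K a
          = (\<Sum>r\<in>{1..<m}. (s r - s (Suc r)) * (real (cnt \<sigma> K r a) / real (card K)))"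
    using avg_score_eq_weighted_cnt[of K \<sigma> a m s] position K finite_subset[OF K] \<open>s m = 0\<close>
    by auto
  have s_step_le: "s (Suc r) \<le> s r" if "r \<in> {1..<m}" for r
    using s_antimono[of r "Suc r"] that by simp
  have "\<bar>avg_score s \<sigma> {0..<n} a - avg_score s \<sigma> K a\<bar>
      \<le> (\<Sum>r\<in>{1..<m}. s r - s (Suc r)) * \<epsilon>"
    unfolding avg_N avg_K
    by (rule abs_weighted_sum_diff_le) (simp_all add: s_step_le proportional)
  also have "\<dots> = \<epsilon>"
    using assms(6) \<open>s 1 = 1\<close> \<open>s m = 0\<close> by (simp add: sum_gaps_atLeastLessThan)
  finally show ?thesis .
qed

end
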